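(* Let $F$ be a finite hypergraph on vertex set $V$ all of whose edges have size $2$ or $3$. Let $(\gamma_v)_{v\in V}$ be independent $\{0,1\}$-valued random variables with $\Pr[\gamma_v=1]\le\rho$ for all $v$, where $0\le\rho\le 1/6$. For a set $S\subseteq V$ write $\gamma_S\neq 1$ for the event that $\gamma_s=0$ for some $s\in S$. For a vertex $x$ let $q_x=\Pr\big[\bigcap_{e\in F:\,x\in e}\{\gamma_{e\setminus\{x\}}\neq 1\}\big]$. Then for any vertices $x,y,z$ with $y\neq x$ and $z\neq x$, \[ \Pr\Big[\bigcap_{e\in F:\,x\in e,\,y\notin e}\{\gamma_{e\setminus\{x\}}\neq 1\}\Big]\le\Pr\Big[\bigcap_{e\in F:\,x\in e,\,y,z\notin e}\{\gamma_{e\setminus\{x\}}\neq 1\}\Big]\le q_x(1+3\rho). \] *)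

theory Defs
  imports "HOL-Probability.Probability"
begin

text \<open>The event that gamma_S is not identically 1, i.e. gamma_s = 0 (False) for some s in S.
  Random variables are bool-valued, True standing for 1 and False for 0.\<close>
definition not_all_one :: "('v \<Rightarrow> 'a \<Rightarrow> bool) \<Rightarrow> 'v set \<Rightarrow> 'a \<Rightarrow> bool" where
  "not_all_one \<gamma> S \<omega> \<longleftrightarrow> (\<exists>s\<in>S. \<not> \<gamma> s \<omega>)"

end

theory Submission
  imports Defs
begin

text \<open>The middle event \<open>E\<close> drops the constraints of the edges through \<open>z\<close>, so it contains the
  left one. It only involves the variables off \<open>{y, z}\<close>, hence is independent of
  \<open>C = {\<gamma>\<^sub>y = 0, \<gamma>\<^sub>z = 0}\<close>; and on \<open>E \<inter> C\<close> every edge through \<open>x\<close> meeting \<open>y\<close> or \<open>z\<close> has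
  a zero, so \<open>E \<inter> C\<close> lies in the event defining \<open>q\<^sub>x\<close>. Thus \<open>P(E) (1 - 2\<rho>) \<le> P(E) P(C) = P(E \<inter> C) \<le> q\<^sub>x\<close>,
  and \<open>1 \<le> (1 - 2\<rho>)(1 + 3\<rho>)\<close> for \<open>0 \<le> \<rho> \<le> 1/6\<close>.\<close>

lemma sets_PiM_count_space_countable:
  fixes S :: "('i \<Rightarrow> 'b::countable) set"
  assumes "finite A" "S \<subseteq> space (PiM A (\<lambda>_. count_space UNIV))"
  shows "S \<in> sets (PiM A (\<lambda>_. count_space UNIV))"
proof -
  have "countable S"
    using assms countable_subset[OF _ countable_PiE[of A "\<lambda>_. UNIV :: 'b set"]]
    by (auto simp: space_PiM)
  moreover have "{f} \<in> sets (PiM A (\<lambda>_. count_space UNIV))" if "f \<in> S" for f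
  proof -
    have "PiE A (\<lambda>i. {f i}) = {f}"
      using that assms(2) by (force simp: space_PiM PiE_iff extensional_def fun_eq_iff)
    moreover have "PiE A (\<lambda>i. {f i}) \<in> sets (PiM A (\<lambda>_. count_space UNIV))"
      using assms(1) by (intro sets_PiM_I_finite) auto
    ultimately show ?thesis by simp
  qed
  ultimately have "(\<Union>f\<in>S. {f}) \<in> sets (PiM A (\<lambda>_. count_space UNIV))"
    by (intro sets.countable_UN') auto
  then show ?thesis by simp
qed

definition depends_only_on :: "'a measure \<Rightarrow> ('i \<Rightarrow> 'a \<Rightarrow> 'b) \<Rightarrow> 'i set \<Rightarrow> ('a \<Rightarrow> bool) \<Rightarrow> bool" where
  "depends_only_on M X A P \<longleftrightarrow>
     (\<forall>\<omega>\<in>space M. \<forall>\<omega>'\<in>space M. (\<forall>i\<in>A. X i \<omega> = X i \<omega>') \<longrightarrow> P \<omega> = P \<omega>')"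

lemma Collect_depends_only_on_eq_vimage:
  fixes X :: "'i \<Rightarrow> 'a \<Rightarrow> 'b"
  assumes "depends_only_on M X A P"
  shows "{\<omega> \<in> space M. P \<omega>} = (\<lambda>\<omega>. restrict (\<lambda>i. X i \<omega>) A) -`
           {f \<in> space (PiM A (\<lambda>_. count_space UNIV)). \<exists>\<omega>\<in>space M. restrict (\<lambda>i. X i \<omega>) A = f \<and> P \<omega>}
         \<inter> space M"
proof -
  have "P \<omega> \<longleftrightarrow> (\<exists>\<omega>'\<in>space M. restrict (\<lambda>i. X i \<omega>') A = restrict (\<lambda>i. X i \<omega>) A \<and> P \<omega>')"
    if "\<omega> \<in> space M" for \<omega>
    using assms that unfolding depends_only_on_def by (metis restrict_apply')
  then show ?thesis by (auto simp: space_PiM)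
qed

lemma sets_Collect_depends_only_on:
  fixes X :: "'i \<Rightarrow> 'a \<Rightarrow> 'b::countable"
  assumes "finite A" "\<And>i. i \<in> A \<Longrightarrow> X i \<in> measurable M (count_space UNIV)"
    and "depends_only_on M X A P"
  shows "{\<omega> \<in> space M. P \<omega>} \<in> sets M"
  unfolding Collect_depends_only_on_eq_vimage[OF assms(3)]
  using assms(1,2)
  by (intro measurable_sets[where A = "PiM A (\<lambda>_. count_space UNIV)"] measurable_restrict
      sets_PiM_count_space_countable) auto

lemma depends_only_on_not_all_one:
  assumes "\<And>e. e \<in> F \<Longrightarrow> G e \<Longrightarrow> S e \<subseteq> A"
  shows "depends_only_on M \<gamma> A (\<lambda>\<omega>. \<forall>e\<in>F. G e \<longrightarrow> not_all_one \<gamma> (S e) \<omega>)"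
  using assms unfolding depends_only_on_def not_all_one_def by (metis subsetD)

lemma (in prob_space) prob_conj_depends_only_on:
  fixes X :: "'i \<Rightarrow> 'a \<Rightarrow> 'b::countable"
  assumes indep: "indep_vars (\<lambda>_. count_space UNIV) X I"
    and "finite A" "finite B" "A \<subseteq> I" "B \<subseteq> I" "A \<inter> B = {}"
    and P: "depends_only_on M X A P" and Q: "depends_only_on M X B Q"
  shows "prob {\<omega> \<in> space M. P \<omega> \<and> Q \<omega>} = prob {\<omega> \<in> space M. P \<omega>} * prob {\<omega> \<in> space M. Q \<omega>}"
proof -
  let ?XA = "\<lambda>\<omega>. restrict (\<lambda>i. X i \<omega>) A" and ?XB = "\<lambda>\<omega>. restrict (\<lambda>i. X i \<omega>) B"
  define SA where "SA = {f \<in> space (PiM A (\<lambda>_. count_space UNIV)). \<exists>\<omega>\<in>space M. ?XA \<omega> = f \<and> P \<omega>}"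
  define SB where "SB = {f \<in> space (PiM B (\<lambda>_. count_space UNIV)). \<exists>\<omega>\<in>space M. ?XB \<omega> = f \<and> Q \<omega>}"
  have eqA: "{\<omega> \<in> space M. P \<omega>} = ?XA -` SA \<inter> space M"
    unfolding SA_def by (rule Collect_depends_only_on_eq_vimage[OF P])
  have eqB: "{\<omega> \<in> space M. Q \<omega>} = ?XB -` SB \<inter> space M"
    unfolding SB_def by (rule Collect_depends_only_on_eq_vimage[OF Q])
  have "{\<omega> \<in> space M. P \<omega> \<and> Q \<omega>} = (\<lambda>\<omega>. (?XA \<omega>, ?XB \<omega>)) -` (SA \<times> SB) \<inter> space M"
    using eqA eqB by blast
  moreover have "indep_var (PiM A (\<lambda>_. count_space UNIV)) ?XA (PiM B (\<lambda>_. count_space UNIV)) ?XB"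
    using assms by (intro indep_var_restrict[OF indep]) auto
  ultimately show ?thesis
    unfolding eqA eqB using assms(2,3)
    by (simp add: indep_varD SA_def SB_def sets_PiM_count_space_countable)
qed

lemma (in prob_space) prob_neither_ge:
  assumes "Measurable.pred M P" "Measurable.pred M Q"
  shows "1 - prob {\<omega> \<in> space M. P \<omega>} - prob {\<omega> \<in> space M. Q \<omega>}
           \<le> prob {\<omega> \<in> space M. \<not> P \<omega> \<and> \<not> Q \<omega>}"
proof -
  have "{\<omega> \<in> space M. \<not> P \<omega> \<and> \<not> Q \<omega>} = space M - ({\<omega> \<in> space M. P \<omega>} \<union> {\<omega> \<in> space M. Q \<omega>})"
    by auto
  moreover have "prob ({\<omega> \<in> space M. P \<omega>} \<union> {\<omega> \<in> space M. Q \<omega>})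
                   \<le> prob {\<omega> \<in> space M. P \<omega>} + prob {\<omega> \<in> space M. Q \<omega>}"
    using assms by (intro measure_subadditive) auto
  ultimately show ?thesis
    using assms by (simp add: prob_compl)
qed

lemma le_mult_one_plus_three:
  fixes a c q \<rho> :: real
  assumes "0 \<le> a" "a * c \<le> q" "1 - 2 * \<rho> \<le> c" "0 \<le> \<rho>" "\<rho> \<le> 1/6"
  shows "a \<le> q * (1 + 3 * \<rho>)"
proof -
  have "1 \<le> (1 - 2 * \<rho>) * (1 + 3 * \<rho>)"
    using mult_nonneg_nonneg[of \<rho> "1 - 6 * \<rho>"] assms(4,5) by (simp add: algebra_simps)
  also have "\<dots> \<le> c * (1 + 3 * \<rho>)"
    using assms(3,4) by (intro mult_right_mono) auto
  finally have "a * 1 \<le> a * (c * (1 + 3 * \<rho>))"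
    using assms(1) by (intro mult_left_mono) auto
  also have "\<dots> \<le> q * (1 + 3 * \<rho>)"
    using assms(2,4) by (simp add: mult.assoc[symmetric] mult_right_mono)
  finally show ?thesis by simp
qed

lemma (in prob_space) prob_avoiding_times_prob_zeros_le:
  fixes \<gamma> :: "'v \<Rightarrow> 'a \<Rightarrow> bool"
  assumes "finite V" "\<And>e. e \<in> F \<Longrightarrow> e \<subseteq> V" "indep_vars (\<lambda>_. count_space UNIV) \<gamma> V"
    and "y \<in> V" "z \<in> V" "y \<noteq> x" "z \<noteq> x"
  shows "prob {\<omega> \<in> space M. \<forall>e\<in>F. x \<in> e \<and> y \<notin> e \<and> z \<notin> e \<longrightarrow> not_all_one \<gamma> (e - {x}) \<omega>}
           * prob {\<omega> \<in> space M. \<not> \<gamma> y \<omega> \<and> \<not> \<gamma> z \<omega>}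
         \<le> prob {\<omega> \<in> space M. \<forall>e\<in>F. x \<in> e \<longrightarrow> not_all_one \<gamma> (e - {x}) \<omega>}"
    (is "prob ?E * prob ?C \<le> prob ?Q")
proof -
  have "\<And>v. v \<in> V \<Longrightarrow> \<gamma> v \<in> measurable M (count_space UNIV)"
    using assms(3) by (auto simp: indep_vars_def)
  then have Q_events: "?Q \<in> events"
    by (auto intro!: sets_Collect_depends_only_on[OF assms(1)] depends_only_on_not_all_one
        dest: assms(2))
  let ?avoids_yz = "\<lambda>\<omega>. \<forall>e\<in>F. x \<in> e \<and> y \<notin> e \<and> z \<notin> e \<longrightarrow> not_all_one \<gamma> (e - {x}) \<omega>"
  have "depends_only_on M \<gamma> (V - {y, z}) ?avoids_yz"
    by (rule depends_only_on_not_all_one) (auto dest: assms(2))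
  moreover have "depends_only_on M \<gamma> {y, z} (\<lambda>\<omega>. \<not> \<gamma> y \<omega> \<and> \<not> \<gamma> z \<omega>)"
    by (simp add: depends_only_on_def)
  ultimately have "prob {\<omega> \<in> space M. ?avoids_yz \<omega> \<and> \<not> \<gamma> y \<omega> \<and> \<not> \<gamma> z \<omega>} = prob ?E * prob ?C"
    using assms(1,4,5) by (intro prob_conj_depends_only_on[OF assms(3)]) auto
  moreover have "prob {\<omega> \<in> space M. ?avoids_yz \<omega> \<and> \<not> \<gamma> y \<omega> \<and> \<not> \<gamma> z \<omega>} \<le> prob ?Q"
    using Q_events assms(6,7) by (intro finite_measure_mono) (auto simp: not_all_one_def)
  ultimately show ?thesis
    by simp
qed

theorem mainTheorem9:
  fixes M :: "'a measure" and V :: "'v set" and F :: "'v set set"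
    and \<gamma> :: "'v \<Rightarrow> 'a \<Rightarrow> bool" and \<rho> :: real and x y z :: 'v
  assumes "prob_space M"
    and "finite V"
    and "\<forall>e\<in>F. e \<subseteq> V \<and> (card e = 2 \<or> card e = 3)"
    and "prob_space.indep_vars M (\<lambda>_. count_space UNIV) \<gamma> V"
    and "\<forall>v\<in>V. measure M {\<omega> \<in> space M. \<gamma> v \<omega>} \<le> \<rho>"
    and "0 \<le> \<rho>" and "\<rho> \<le> 1/6"
    and "x \<in> V" and "y \<in> V" and "z \<in> V" and "y \<noteq> x" and "z \<noteq> x"
  shows "measure M {\<omega> \<in> space M. \<forall>e\<in>F. x \<in> e \<and> y \<notin> e \<longrightarrow> not_all_one \<gamma> (e - {x}) \<omega>}
           \<le> measure M {\<omega> \<in> space M. \<forall>e\<in>F. x \<in> e \<and> y \<notin> e \<and> z \<notin> e \<longrightarrow> not_all_one \<gamma> (e - {x}) \<omega>}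
       \<and> measure M {\<omega> \<in> space M. \<forall>e\<in>F. x \<in> e \<and> y \<notin> e \<and> z \<notin> e \<longrightarrow> not_all_one \<gamma> (e - {x}) \<omega>}
           \<le> measure M {\<omega> \<in> space M. \<forall>e\<in>F. x \<in> e \<longrightarrow> not_all_one \<gamma> (e - {x}) \<omega>} * (1 + 3 * \<rho>)"
    (is "measure M ?E' \<le> measure M ?E \<and> _ \<le> measure M ?Q * _")
proof -
  interpret prob_space M by fact
  have meas: "\<And>v. v \<in> V \<Longrightarrow> \<gamma> v \<in> measurable M (count_space UNIV)"
    using assms(4) by (auto simp: indep_vars_def)
  have edges: "\<And>e. e \<in> F \<Longrightarrow> e \<subseteq> V"
    using assms(3) by auto
  have "prob ?E * prob {\<omega> \<in> space M. \<not> \<gamma> y \<omega> \<and> \<not> \<gamma> z \<omega>} \<le> prob ?Q"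
    using prob_avoiding_times_prob_zeros_le[OF assms(2) edges assms(4,9-12)] .
  moreover have "1 - 2 * \<rho> \<le> prob {\<omega> \<in> space M. \<not> \<gamma> y \<omega> \<and> \<not> \<gamma> z \<omega>}"
    using prob_neither_ge[OF meas[OF assms(9)] meas[OF assms(10)]]
      assms(5)[rule_format, OF assms(9)] assms(5)[rule_format, OF assms(10)] by linarith
  ultimately have "prob ?E \<le> prob ?Q * (1 + 3 * \<rho>)"
    using assms(6,7) by (intro le_mult_one_plus_three) auto
  moreover have "?E \<in> events"
    by (auto intro!: sets_Collect_depends_only_on[OF assms(2) meas] depends_only_on_not_all_one
        dest: edges)
  then have "prob ?E' \<le> prob ?E"
    by (intro finite_measure_mono) auto
  ultimately show ?thesis by simp
qed

end
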